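(* Let $\bm{A}=[\bm{A}_1\ \bm{A}_2]$ have full column rank with $\bm{A}_j^\top\bm{A}_j=\bm{I}_j$ and $\bm{C}:=\bm{A}_2^\top\bm{A}_1\ne0$. Let $S_{00}:=(0,1]\times(0,1]$, $S_{01}:=(0,1]\times[1,\infty)$, $S_{10}:=[1,\infty)\times(0,1]$. Then $\min_{(\gamma_1,\gamma_2)\in S_{00}}\rho(\bm{M}(\gamma_1,\gamma_2))=\rho(\bm{M}(1,1))$, $\min_{(\gamma_1,\gamma_2)\in S_{01}}\rho(\bm{M}(\gamma_1,\gamma_2))=\min_{\gamma_2\ge1}\rho(\bm{M}(1,\gamma_2))$, and $\min_{(\gamma_1,\gamma_2)\in S_{10}}\rho(\bm{M}(\gamma_1,\gamma_2))=\min_{\gamma_1\ge1}\rho(\bm{M}(\gamma_1,1))$.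
   Context: $\rho$: spectral radius. $\bm{M}(\gamma_1,\gamma_2)=\begin{bmatrix}(1-\gamma_1)\bm{I}_1&-\gamma_1\bm{C}^\top\\-\gamma_2(1-\gamma_1)\bm{C}&(1-\gamma_2)\bm{I}_2+\gamma_1\gamma_2\bm{C}\bm{C}^\top\end{bmatrix}$, the two-block gradient descent iteration matrix with stepsizes $\gamma_1,\gamma_2$ for least squares under $\bm{A}_j^\top\bm{A}_j=\bm{I}_j$. *)

theory Defs
  imports "Jordan_Normal_Form.Spectral_Radius"
begin

definition rho :: "real mat \<Rightarrow> real" where
  "rho M = spectral_radius (map_mat complex_of_real M)"

text \<open>Two-block gradient descent iteration matrix M(g1,g2), C is n2 x n1.\<close>
definition iterM :: "nat \<Rightarrow> nat \<Rightarrow> real mat \<Rightarrow> real \<Rightarrow> real \<Rightarrow> real mat" where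
  "iterM n1 n2 C g1 g2 = four_block_mat
     ((1 - g1) \<cdot>\<^sub>m 1\<^sub>m n1)                 ((- g1) \<cdot>\<^sub>m transpose_mat C)
     ((- (g2 * (1 - g1))) \<cdot>\<^sub>m C)        ((1 - g2) \<cdot>\<^sub>m 1\<^sub>m n2 + (g1 * g2) \<cdot>\<^sub>m (C * transpose_mat C))"

text \<open>Horizontal concatenation [A1 A2] of two m-row matrices.\<close>
definition hcat :: "'a::zero mat \<Rightarrow> 'a mat \<Rightarrow> 'a mat" where
  "hcat A1 A2 = four_block_mat A1 A2 (0\<^sub>m 0 (dim_col A1)) (0\<^sub>m 0 (dim_col A2))"

definition full_column_rank :: "'a::field mat \<Rightarrow> bool" where
  "full_column_rank A \<longleftrightarrow> (\<forall>v \<in> carrier_vec (dim_col A). A *\<^sub>v v = 0\<^sub>v (dim_row A) \<longrightarrow> v = 0\<^sub>v (dim_col A))"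

definition is_min :: "real set \<Rightarrow> real \<Rightarrow> bool" where
  "is_min S x \<longleftrightarrow> x \<in> S \<and> (\<forall>y\<in>S. x \<le> y)"

end

theory Submission
  imports Defs
begin

text \<open>An eigenvector \<open>(x, y)\<close> of \<open>M(\<gamma>\<^sub>1,\<gamma>\<^sub>2)\<close> is driven by an eigenvector of \<open>C C\<^sup>T\<close>:
  every nonzero eigenvalue \<open>r\<close> of \<open>C C\<^sup>T\<close> contributes the two roots of
  \<open>\<lambda>\<^sup>2 - (2 - \<gamma>\<^sub>1 - \<gamma>\<^sub>2 + \<gamma>\<^sub>1\<gamma>\<^sub>2 r) \<lambda> + (1 - \<gamma>\<^sub>1)(1 - \<gamma>\<^sub>2)\<close>, and the kernels of \<open>C\<^sup>T\<close> and \<open>C\<close>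
  contribute \<open>1 - \<gamma>\<^sub>2\<close> and \<open>1 - \<gamma>\<^sub>1\<close>; for \<open>\<gamma>\<^sub>1 = 1\<close> nothing else occurs, the spectrum being
  \<open>{0} \<union> {1 - \<gamma>\<^sub>2 + \<gamma>\<^sub>2 r}\<close>. The eigenvalues \<open>r\<close> are squared cosines of principal angles,
  so they lie in \<open>[l, h] \<subseteq> [0, 1)\<close> by full column rank.

  On \<open>S\<^sub>0\<^sub>0\<close> the quadratic for \<open>r = h\<close> always has a root of modulus at least \<open>h = \<rho>(M(1,1))\<close>.
  On \<open>S\<^sub>0\<^sub>1\<close> the best \<open>\<gamma>\<^sub>2\<close> for \<open>\<gamma>\<^sub>1 = 1\<close> is \<open>2 / (2 - h - l)\<close>, with rate \<open>(h - l) / (2 - h - l)\<close>;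
  for any other stepsizes a real root belonging to \<open>h\<close> (if \<open>\<gamma>\<^sub>2\<close> is smaller) or to \<open>l\<close>
  (if larger), or the eigenvalue \<open>1 - \<gamma>\<^sub>2\<close> when \<open>l = 0\<close>, is at least as large in modulus.
  \<open>S\<^sub>1\<^sub>0\<close> is the same argument for \<open>C\<^sup>T\<close> with the blocks exchanged.\<close>

section \<open>Real matrices acting on complex vectors\<close>

abbreviation cmat :: "real mat \<Rightarrow> complex mat" where
  "cmat A \<equiv> map_mat complex_of_real A"

lemma transpose_cmat: "transpose_mat (cmat A) = cmat (transpose_mat A)"
  by (simp add: map_mat_transpose)

lemma cscalar_prod_transpose_cmat:
  assumes R: "R \<in> carrier_mat a b" and w: "w \<in> carrier_vec a" and y: "y \<in> carrier_vec b"
  shows "(transpose_mat (cmat R) *\<^sub>v w) \<bullet>c y = w \<bullet>c (cmat R *\<^sub>v y)"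
proof -
  have "conjugate (cmat R *\<^sub>v y) = cmat R *\<^sub>v conjugate y"
    using R y by (intro eq_vecI) (auto simp: mult_mat_vec_def scalar_prod_def sum_conjugate conjugate_dist_mul)
  then show ?thesis
    using transpose_vec_mult_scalar[of "cmat R" a b "conjugate y" w] R w y by simp
qed

lemma cscalar_prod_cmat:
  assumes R: "R \<in> carrier_mat a b" and w: "w \<in> carrier_vec b" and y: "y \<in> carrier_vec a"
  shows "(cmat R *\<^sub>v w) \<bullet>c y = w \<bullet>c (transpose_mat (cmat R) *\<^sub>v y)"
  using cscalar_prod_transpose_cmat[of "transpose_mat R" b a w y] R w y by (simp add: transpose_cmat)

lemma cscalar_square_of_real_nonneg: "v \<bullet>c v = complex_of_real (Re (v \<bullet>c v)) \<and> 0 \<le> Re (v \<bullet>c v)"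
  using conjugate_square_ge_0_vec[of v] by (auto simp: less_eq_complex_def complex_eq_iff)

lemma cscalar_square_cmat_orthonormal:
  assumes A: "A \<in> carrier_mat m p" and orth: "transpose_mat A * A = 1\<^sub>m p" and w: "w \<in> carrier_vec p"
  shows "(cmat A *\<^sub>v w) \<bullet>c (cmat A *\<^sub>v w) = w \<bullet>c w"
proof -
  have "transpose_mat (cmat A) * cmat A = cmat (transpose_mat A * A)"
    using A by (simp add: transpose_cmat of_real_hom.mat_hom_mult[of "transpose_mat A" p m A p])
  also have "\<dots> = 1\<^sub>m p"
    using orth by (simp add: of_real_hom.mat_hom_one)
  finally have "transpose_mat (cmat A) * cmat A = 1\<^sub>m p" .
  then have "transpose_mat (cmat A) *\<^sub>v (cmat A *\<^sub>v w) = w"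
    using assoc_mult_mat_vec[of "transpose_mat (cmat A)" p m "cmat A" p w] A w by auto
  then show ?thesis
    using cscalar_prod_cmat[of A m p w "cmat A *\<^sub>v w"] A w by auto
qed

lemma cscalar_square_projection:
  assumes A: "A \<in> carrier_mat m p" and orth: "transpose_mat A * A = 1\<^sub>m p" and z: "z \<in> carrier_vec m"
  defines "w \<equiv> transpose_mat (cmat A) *\<^sub>v z"
  defines "d \<equiv> z - cmat A *\<^sub>v w"
  shows "d \<bullet>c d = z \<bullet>c z - w \<bullet>c w"
proof -
  have w: "w \<in> carrier_vec p" and Aw: "cmat A *\<^sub>v w \<in> carrier_vec m"
    unfolding w_def using A z by auto
  have Aw_z: "(cmat A *\<^sub>v w) \<bullet>c z = w \<bullet>c w"
    unfolding w_def by (rule cscalar_prod_cmat[OF A _ z]) (use A z in auto)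
  have z_Aw: "z \<bullet>c (cmat A *\<^sub>v w) = w \<bullet>c w"
  proof -
    have "z \<bullet>c (cmat A *\<^sub>v w) = conjugate ((cmat A *\<^sub>v w) \<bullet>c z)"
      using conjugate_conjugate_sprod[OF Aw z] conjugate_vec_sprod_comm[OF z Aw]
      by (metis conjugate_id)
    also have "\<dots> = w \<bullet>c w"
      using Aw_z cscalar_square_of_real_nonneg[of w]
      by (metis complex_cnj_complex_of_real conjugate_complex_def)
    finally show ?thesis .
  qed
  have "d \<bullet>c d = z \<bullet>c z - z \<bullet>c (cmat A *\<^sub>v w) - (cmat A *\<^sub>v w) \<bullet>c z
      + (cmat A *\<^sub>v w) \<bullet>c (cmat A *\<^sub>v w)"
  proof -
    have "conjugate d = conjugate z - conjugate (cmat A *\<^sub>v w)"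
      unfolding d_def using A z Aw by (intro eq_vecI) auto
    then show ?thesis
      unfolding d_def using z Aw
      by (simp add: minus_scalar_prod_distrib[of _ m] scalar_prod_minus_distrib[of _ m] algebra_simps)
  qed
  then show ?thesis
    using Aw_z z_Aw cscalar_square_cmat_orthonormal[OF A orth w] by simp
qed

lemma mult_mat_zero_vec [simp]:
  "A \<in> carrier_mat r c \<Longrightarrow> A *\<^sub>v 0\<^sub>v c = (0\<^sub>v r :: 'a :: semiring_0 vec)"
  by (intro eq_vecI) (auto simp: scalar_prod_def)

lemma zero_vec_add_append: "0\<^sub>v (n1 + n2) = (0\<^sub>v n1 :: 'a :: zero vec) @\<^sub>v 0\<^sub>v n2"
  by (intro eq_vecI) auto

lemma smult_vec_eq_0_scalar:
  fixes k :: "'a :: idom"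
  assumes v: "v \<in> carrier_vec n" "v \<noteq> 0\<^sub>v n" and kv: "k \<cdot>\<^sub>v v = 0\<^sub>v n"
  shows "k = 0"
proof -
  obtain i where "i < n" "v $ i \<noteq> 0"
    using v by (metis carrier_vecD eq_vecI index_zero_vec)
  then show ?thesis
    using arg_cong[OF kv, of "\<lambda>x. x $ i"] v by simp
qed

lemma Re_cmat_mult_vec:
  assumes "R \<in> carrier_mat a b" and "y \<in> carrier_vec b"
  shows "map_vec Re (cmat R *\<^sub>v y) = R *\<^sub>v map_vec Re y"
  using assms by (intro eq_vecI) (auto simp: mult_mat_vec_def scalar_prod_def Re_sum)

lemma Im_cmat_mult_vec:
  assumes "R \<in> carrier_mat a b" and "y \<in> carrier_vec b"
  shows "map_vec Im (cmat R *\<^sub>v y) = R *\<^sub>v map_vec Im y"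
  using assms by (intro eq_vecI) (auto simp: mult_mat_vec_def scalar_prod_def Im_sum)

lemma cmat_ranges_disjoint:
  assumes A: "A \<in> carrier_mat m p" and B: "B \<in> carrier_mat m q"
    and disj: "\<And>u v. u \<in> carrier_vec p \<Longrightarrow> v \<in> carrier_vec q \<Longrightarrow> A *\<^sub>v u = B *\<^sub>v v \<Longrightarrow> v = 0\<^sub>v q"
    and u: "u \<in> carrier_vec p" and v: "v \<in> carrier_vec q"
    and eq: "cmat A *\<^sub>v u = cmat B *\<^sub>v v"
  shows "v = 0\<^sub>v q"
proof -
  have "A *\<^sub>v map_vec Re u = B *\<^sub>v map_vec Re v"
    using arg_cong[OF eq, of "map_vec Re"] Re_cmat_mult_vec[OF A u] Re_cmat_mult_vec[OF B v] by simp
  then have Re0: "map_vec Re v = 0\<^sub>v q"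
    using disj[of "map_vec Re u" "map_vec Re v"] u v by auto
  have "A *\<^sub>v map_vec Im u = B *\<^sub>v map_vec Im v"
    using arg_cong[OF eq, of "map_vec Im"] Im_cmat_mult_vec[OF A u] Im_cmat_mult_vec[OF B v] by simp
  then have Im0: "map_vec Im v = 0\<^sub>v q"
    using disj[of "map_vec Im u" "map_vec Im v"] u v by auto
  show ?thesis
  proof (intro eq_vecI)
    fix i assume "i < dim_vec (0\<^sub>v q :: complex vec)"
    then show "v $ i = 0\<^sub>v q $ i"
      using arg_cong[OF Re0, of "\<lambda>x. x $ i"] arg_cong[OF Im0, of "\<lambda>x. x $ i"] v
      by (auto simp: complex_eq_iff)
  qed (use v in auto)
qed

section \<open>Principal angles between two ranges\<close>

text \<open>All eigenvalues of \<open>C C\<^sup>T\<close> are real (\<open>gram_eigenvalue_of_real\<close>); for \<open>C = A\<^sub>2\<^sup>T A\<^sub>1\<close> they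
  are the squared cosines of the principal angles between the ranges of \<open>A\<^sub>1\<close> and \<open>A\<^sub>2\<close>.\<close>
definition gram_spectrum :: "real mat \<Rightarrow> real set" where
  "gram_spectrum C = {r. eigenvalue (cmat (C * transpose_mat C)) (complex_of_real r)}"

lemma cmat_gram:
  assumes "C \<in> carrier_mat q p"
  shows "cmat (C * transpose_mat C) = cmat C * transpose_mat (cmat C)"
  using assms by (simp add: transpose_cmat of_real_hom.mat_hom_mult[of C q p "transpose_mat C" q])

lemma gram_spectrum_eigenvector:
  assumes C: "C \<in> carrier_mat q p" and r: "r \<in> gram_spectrum C"
  obtains y where "y \<in> carrier_vec q" "y \<noteq> 0\<^sub>v q"
    "cmat C *\<^sub>v (transpose_mat (cmat C) *\<^sub>v y) = complex_of_real r \<cdot>\<^sub>v y"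
proof -
  obtain y where y: "y \<in> carrier_vec q" "y \<noteq> 0\<^sub>v q"
    and ev: "cmat (C * transpose_mat C) *\<^sub>v y = complex_of_real r \<cdot>\<^sub>v y"
    using r C unfolding gram_spectrum_def eigenvalue_def eigenvector_def by auto
  then show ?thesis
    using that C by (auto simp: cmat_gram[OF C])
qed

lemma gram_eigenvector_eq_quotient:
  assumes C: "C \<in> carrier_mat q p" and y: "y \<in> carrier_vec q" "y \<noteq> 0\<^sub>v q"
    and ev: "cmat (C * transpose_mat C) *\<^sub>v y = \<mu> \<cdot>\<^sub>v y"
  defines "w \<equiv> transpose_mat (cmat C) *\<^sub>v y"
  shows "\<mu> = complex_of_real (Re (w \<bullet>c w) / Re (y \<bullet>c y))"
proof -
  have w: "w \<in> carrier_vec p" unfolding w_def using C y by auto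
  have "\<mu> * (y \<bullet>c y) = (cmat (C * transpose_mat C) *\<^sub>v y) \<bullet>c y"
    using ev y by simp
  also have "\<dots> = (cmat C *\<^sub>v w) \<bullet>c y"
    unfolding w_def cmat_gram[OF C] using C y by auto
  also have "\<dots> = w \<bullet>c w"
    unfolding w_def using cscalar_prod_cmat[of C q p "transpose_mat (cmat C) *\<^sub>v y" y] C y by auto
  finally have "\<mu> * (y \<bullet>c y) = w \<bullet>c w" .
  moreover have "0 < Re (y \<bullet>c y)"
    using y conjugate_square_greater_0_vec[of y q] by (simp add: less_complex_def)
  ultimately show ?thesis
    using cscalar_square_of_real_nonneg[of y] cscalar_square_of_real_nonneg[of w]
    by (metis nonzero_eq_divide_eq of_real_divide of_real_eq_0_iff less_irrefl)
qed

lemma gram_eigenvalue_of_real: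
  assumes C: "C \<in> carrier_mat q p" and ev: "eigenvalue (cmat (C * transpose_mat C)) \<mu>"
  shows "\<mu> \<in> complex_of_real ` gram_spectrum C"
proof -
  obtain y where "y \<in> carrier_vec q" "y \<noteq> 0\<^sub>v q" "cmat (C * transpose_mat C) *\<^sub>v y = \<mu> \<cdot>\<^sub>v y"
    using ev C unfolding eigenvalue_def eigenvector_def by auto
  then obtain r where "\<mu> = complex_of_real r"
    using gram_eigenvector_eq_quotient[OF C] by blast
  then show ?thesis
    using ev unfolding gram_spectrum_def by blast
qed

lemma gram_eigenvalue_intro:
  assumes C: "C \<in> carrier_mat q p" and y: "y \<in> carrier_vec q" "y \<noteq> 0\<^sub>v q"
    and ev: "cmat C *\<^sub>v (transpose_mat (cmat C) *\<^sub>v y) = \<mu> \<cdot>\<^sub>v y"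
  shows "\<mu> \<in> complex_of_real ` gram_spectrum C"
proof (rule gram_eigenvalue_of_real[OF C])
  show "eigenvalue (cmat (C * transpose_mat C)) \<mu>"
    unfolding eigenvalue_def eigenvector_def using C y ev by (auto simp: cmat_gram[OF C])
qed

lemma gram_spectrum_nonneg:
  assumes C: "C \<in> carrier_mat q p" and r: "r \<in> gram_spectrum C"
  shows "0 \<le> r"
proof -
  obtain y where y: "y \<in> carrier_vec q" "y \<noteq> 0\<^sub>v q"
    and ev: "cmat (C * transpose_mat C) *\<^sub>v y = complex_of_real r \<cdot>\<^sub>v y"
    using r C unfolding gram_spectrum_def eigenvalue_def eigenvector_def by auto
  let ?w = "transpose_mat (cmat C) *\<^sub>v y"
  have "r = Re (?w \<bullet>c ?w) / Re (y \<bullet>c y)"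
    using gram_eigenvector_eq_quotient[OF C y ev] by (metis of_real_eq_iff)
  then show ?thesis
    using cscalar_square_of_real_nonneg[of y] cscalar_square_of_real_nonneg[of ?w] by simp
qed

lemma gram_spectrum_kernel:
  assumes C: "C \<in> carrier_mat q p" and "0 \<in> gram_spectrum C"
  obtains y where "y \<in> carrier_vec q" "y \<noteq> 0\<^sub>v q" "transpose_mat (cmat C) *\<^sub>v y = 0\<^sub>v p"
proof -
  obtain y where y: "y \<in> carrier_vec q" "y \<noteq> 0\<^sub>v q"
    and ev: "cmat (C * transpose_mat C) *\<^sub>v y = complex_of_real 0 \<cdot>\<^sub>v y"
    using assms unfolding gram_spectrum_def eigenvalue_def eigenvector_def by auto
  let ?w = "transpose_mat (cmat C) *\<^sub>v y"
  have "Re (?w \<bullet>c ?w) = 0"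
    using gram_eigenvector_eq_quotient[OF C y ev] conjugate_square_greater_0_vec[of y q] y
    by (simp add: less_complex_def)
  then have "?w \<bullet>c ?w = 0"
    using cscalar_square_of_real_nonneg[of ?w] by simp
  then show ?thesis
    using that y C conjugate_square_eq_0_vec[of ?w p] by auto
qed

lemma gram_spectrum_transpose:
  assumes C: "C \<in> carrier_mat q p" and r: "r \<in> gram_spectrum (transpose_mat C)" and r0: "r \<noteq> 0"
  shows "r \<in> gram_spectrum C"
proof -
  obtain x where x: "x \<in> carrier_vec p" "x \<noteq> 0\<^sub>v p"
    and ev: "cmat (transpose_mat C * C) *\<^sub>v x = complex_of_real r \<cdot>\<^sub>v x"
    using r C unfolding gram_spectrum_def eigenvalue_def eigenvector_def by auto
  have Cc: "cmat C \<in> carrier_mat q p" and Ct: "transpose_mat (cmat C) \<in> carrier_mat p q"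
    using C by auto
  have CtC: "cmat (transpose_mat C * C) = transpose_mat (cmat C) * cmat C"
    using C by (simp add: transpose_cmat of_real_hom.mat_hom_mult[of "transpose_mat C" p q C p])
  let ?y = "cmat C *\<^sub>v x"
  have y: "?y \<in> carrier_vec q" using Cc x by auto
  have "cmat (C * transpose_mat C) *\<^sub>v ?y = cmat C *\<^sub>v (cmat (transpose_mat C * C) *\<^sub>v x)"
    unfolding cmat_gram[OF C] CtC using Cc Ct x by (simp add: assoc_mult_mat_vec[of _ q p _ q])
  also have "\<dots> = complex_of_real r \<cdot>\<^sub>v ?y"
    unfolding ev using mult_mat_vec[OF Cc x(1)] .
  finally have ev': "cmat (C * transpose_mat C) *\<^sub>v ?y = complex_of_real r \<cdot>\<^sub>v ?y" .
  have "?y \<noteq> 0\<^sub>v q"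
  proof
    assume "?y = 0\<^sub>v q"
    then have "complex_of_real r \<cdot>\<^sub>v x = 0\<^sub>v p"
      using ev[symmetric] Ct x by (auto simp: CtC assoc_mult_mat_vec[of _ p q _ p, symmetric])
    then have "complex_of_real r = 0"
      by (rule smult_vec_eq_0_scalar[OF x])
    then show False
      using r0 by simp
  qed
  then show ?thesis
    using y ev' C unfolding gram_spectrum_def eigenvalue_def eigenvector_def by auto
qed

lemma finite_gram_spectrum:
  assumes "C \<in> carrier_mat q p"
  shows "finite (gram_spectrum C)"
proof -
  have "gram_spectrum C = complex_of_real -` spectrum (cmat (C * transpose_mat C))"
    unfolding gram_spectrum_def spectrum_def by auto
  moreover have "cmat (C * transpose_mat C) \<in> carrier_mat q q"
    using assms by auto
  ultimately show ?thesis
    using card_finite_spectrum(1) by (metis finite_vimageI inj_of_real)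
qed

lemma gram_spectrum_nonempty:
  assumes C: "C \<in> carrier_mat q p" and q: "0 < q"
  shows "gram_spectrum C \<noteq> {}"
proof -
  have "cmat (C * transpose_mat C) \<in> carrier_mat q q"
    using C by auto
  then obtain \<mu> where "eigenvalue (cmat (C * transpose_mat C)) \<mu>"
    using spectrum_non_empty[OF _ q] unfolding spectrum_def by blast
  then show ?thesis
    using gram_eigenvalue_of_real[OF C] by blast
qed

lemma projection_eq_if_cscalar_square_ge:
  assumes A: "A \<in> carrier_mat m p" and orth: "transpose_mat A * A = 1\<^sub>m p" and z: "z \<in> carrier_vec m"
    and ge: "Re (z \<bullet>c z) \<le> Re ((transpose_mat (cmat A) *\<^sub>v z) \<bullet>c (transpose_mat (cmat A) *\<^sub>v z))"
  shows "cmat A *\<^sub>v (transpose_mat (cmat A) *\<^sub>v z) = z"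
proof -
  let ?d = "z - cmat A *\<^sub>v (transpose_mat (cmat A) *\<^sub>v z)"
  have "Re (?d \<bullet>c ?d) \<le> 0"
    using cscalar_square_projection[OF A orth z] ge by simp
  then have "?d \<bullet>c ?d = 0"
    using cscalar_square_of_real_nonneg[of ?d] by (metis antisym of_real_0)
  then have d0: "?d = 0\<^sub>v m"
    using z A conjugate_square_eq_0_vec[of ?d m] by auto
  show ?thesis
  proof (rule eq_vecI)
    fix i assume "i < dim_vec z"
    then show "(cmat A *\<^sub>v (transpose_mat (cmat A) *\<^sub>v z)) $ i = z $ i"
      using arg_cong[OF d0, of "\<lambda>v. v $ i"] z A by simp
  qed (use z A in auto)
qed

text \<open>If the ranges of the orthonormal bases \<open>A\<close> and \<open>B\<close> meet only in \<open>0\<close>, no principal angle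
  between them vanishes: by Bessel, \<open>r \<parallel>y\<parallel>\<^sup>2 = \<parallel>A\<^sup>T B y\<parallel>\<^sup>2 \<le> \<parallel>B y\<parallel>\<^sup>2 = \<parallel>y\<parallel>\<^sup>2\<close>, with
  equality only if \<open>B y\<close> lies in the range of \<open>A\<close>.\<close>
lemma cross_gram_spectrum_subset:
  assumes A: "A \<in> carrier_mat m p" and B: "B \<in> carrier_mat m q"
    and orthA: "transpose_mat A * A = 1\<^sub>m p" and orthB: "transpose_mat B * B = 1\<^sub>m q"
    and disj: "\<And>u v. u \<in> carrier_vec p \<Longrightarrow> v \<in> carrier_vec q \<Longrightarrow> A *\<^sub>v u = B *\<^sub>v v \<Longrightarrow> v = 0\<^sub>v q"
  shows "gram_spectrum (transpose_mat B * A) \<subseteq> {0..<1}"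
proof
  fix r assume r: "r \<in> gram_spectrum (transpose_mat B * A)"
  define C where "C = transpose_mat B * A"
  have C: "C \<in> carrier_mat q p" unfolding C_def using A B by auto
  have "\<not> 1 \<le> r"
  proof
    assume r1: "1 \<le> r"
    obtain y where y: "y \<in> carrier_vec q" "y \<noteq> 0\<^sub>v q"
      and ev: "cmat (C * transpose_mat C) *\<^sub>v y = complex_of_real r \<cdot>\<^sub>v y"
      using r C unfolding C_def gram_spectrum_def eigenvalue_def eigenvector_def by auto
    define z where "z = cmat B *\<^sub>v y"
    define w where "w = transpose_mat (cmat A) *\<^sub>v z"
    have z: "z \<in> carrier_vec m" and w: "w \<in> carrier_vec p"
      unfolding z_def w_def using A B y by auto
    have "transpose_mat (cmat C) = transpose_mat (cmat A) * cmat B"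
      unfolding C_def using A B
      by (simp add: transpose_cmat transpose_mult[of "transpose_mat B" q m A p]
          of_real_hom.mat_hom_mult[of "transpose_mat A" p m B q])
    then have "w = transpose_mat (cmat C) *\<^sub>v y"
      unfolding w_def z_def using A B y by (simp add: assoc_mult_mat_vec[of _ p m _ q])
    then have "r = Re (w \<bullet>c w) / Re (y \<bullet>c y)"
      using gram_eigenvector_eq_quotient[OF C y ev] by (metis of_real_eq_iff)
    moreover have "0 < Re (y \<bullet>c y)"
      using y conjugate_square_greater_0_vec[of y q] by (simp add: less_complex_def)
    moreover have "z \<bullet>c z = y \<bullet>c y"
      unfolding z_def by (rule cscalar_square_cmat_orthonormal[OF B orthB y(1)])
    ultimately have "Re (z \<bullet>c z) \<le> Re (w \<bullet>c w)"
      using r1 by (simp add: le_divide_eq)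
    then have "cmat A *\<^sub>v w = cmat B *\<^sub>v y"
      using projection_eq_if_cscalar_square_ge[OF A orthA z] unfolding w_def z_def by simp
    then show False
      using cmat_ranges_disjoint[OF A B disj w y(1)] y by simp
  qed
  then show "r \<in> {0..<1}"
    using gram_spectrum_nonneg[OF C r[folded C_def]] by simp
qed

lemma full_column_rank_hcat_disjoint:
  fixes A1 A2 :: "real mat"
  assumes A1: "A1 \<in> carrier_mat m n1" and A2: "A2 \<in> carrier_mat m n2"
    and rank: "full_column_rank (hcat A1 A2)"
    and u: "u \<in> carrier_vec n1" and v: "v \<in> carrier_vec n2" and eq: "A1 *\<^sub>v u = A2 *\<^sub>v v"
  shows "u = 0\<^sub>v n1 \<and> v = 0\<^sub>v n2"
proof -
  let ?H = "hcat A1 A2"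
  have H: "?H = four_block_mat A1 A2 (0\<^sub>m 0 n1) (0\<^sub>m 0 n2)"
    unfolding hcat_def using A1 A2 by auto
  have dims: "dim_col ?H = n1 + n2" "dim_row ?H = m"
    unfolding H using A1 A2 by auto
  have "?H *\<^sub>v (u @\<^sub>v - v) = (A1 *\<^sub>v u + A2 *\<^sub>v - v) @\<^sub>v (0\<^sub>m 0 n1 *\<^sub>v u + 0\<^sub>m 0 n2 *\<^sub>v - v)"
    unfolding H by (rule four_block_mat_mult_vec[OF A1 A2 _ _ u]) (use v in auto)
  also have "\<dots> = 0\<^sub>v m"
    using A1 A2 u v eq by (intro eq_vecI) auto
  finally have "u @\<^sub>v - v = 0\<^sub>v (n1 + n2)"
    using rank u v unfolding full_column_rank_def dims by auto
  then have "u @\<^sub>v - v = 0\<^sub>v n1 @\<^sub>v 0\<^sub>v n2"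
    by (simp add: zero_vec_add_append)
  then show ?thesis
    using u v uminus_zero_vec_eq[OF v] by auto
qed

section \<open>Eigenvalues of the iteration matrix\<close>

lemma cmat_iterM:
  assumes C: "C \<in> carrier_mat n2 n1"
  shows "cmat (iterM n1 n2 C g1 g2) = four_block_mat
     (complex_of_real (1 - g1) \<cdot>\<^sub>m 1\<^sub>m n1) (complex_of_real (- g1) \<cdot>\<^sub>m transpose_mat (cmat C))
     (complex_of_real (- (g2 * (1 - g1))) \<cdot>\<^sub>m cmat C)
     (complex_of_real (1 - g2) \<cdot>\<^sub>m 1\<^sub>m n2 + complex_of_real (g1 * g2) \<cdot>\<^sub>m (cmat C * transpose_mat (cmat C)))"
proof -
  have smult: "cmat (a \<cdot>\<^sub>m A) = complex_of_real a \<cdot>\<^sub>m cmat A" for a A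
    by (intro eq_matI) auto
  have add: "cmat (A + B) = cmat A + cmat B" if "A \<in> carrier_mat n2 n2" "B \<in> carrier_mat n2 n2" for A B
    using that by (intro eq_matI) auto
  show ?thesis
    unfolding iterM_def using C
    by (subst map_four_block_mat)
      (auto simp: smult add[of "_ \<cdot>\<^sub>m 1\<^sub>m n2"] of_real_hom.mat_hom_one transpose_cmat cmat_gram[OF C])
qed

lemma cmat_iterM_mult_append:
  assumes C: "C \<in> carrier_mat n2 n1" and x: "x \<in> carrier_vec n1" and y: "y \<in> carrier_vec n2"
  shows "cmat (iterM n1 n2 C g1 g2) *\<^sub>v (x @\<^sub>v y) =
    (complex_of_real (1 - g1) \<cdot>\<^sub>v x + complex_of_real (- g1) \<cdot>\<^sub>v (transpose_mat (cmat C) *\<^sub>v y)) @\<^sub>v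
    (complex_of_real (- (g2 * (1 - g1))) \<cdot>\<^sub>v (cmat C *\<^sub>v x) + (complex_of_real (1 - g2) \<cdot>\<^sub>v y +
       complex_of_real (g1 * g2) \<cdot>\<^sub>v (cmat C *\<^sub>v (transpose_mat (cmat C) *\<^sub>v y))))"
proof -
  have smult: "(a \<cdot>\<^sub>m A) *\<^sub>v v = a \<cdot>\<^sub>v (A *\<^sub>v v)"
    if "A \<in> carrier_mat r c" "v \<in> carrier_vec c" for a :: complex and A v r c
    using that by (intro eq_vecI) (auto simp: mult_mat_vec_def scalar_prod_def sum_distrib_left ac_simps)
  show ?thesis
    unfolding cmat_iterM[OF C]
    by (subst four_block_mat_mult_vec[OF _ _ _ _ x y])
      (use C x y in \<open>auto simp: add_mult_distrib_mat_vec[of _ n2 n2] assoc_mult_mat_vec[of _ n2 n1 _ n2]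
        smult[of _ n1 n1] smult[of _ n2 n2] smult[of _ n1 n2] smult[of _ n2 n1]\<close>)
qed

lemma eigenvalue_iterM_iff:
  assumes C: "C \<in> carrier_mat n2 n1"
  shows "eigenvalue (cmat (iterM n1 n2 C g1 g2)) z \<longleftrightarrow>
    (\<exists>x y. x \<in> carrier_vec n1 \<and> y \<in> carrier_vec n2 \<and> (x \<noteq> 0\<^sub>v n1 \<or> y \<noteq> 0\<^sub>v n2) \<and>
      complex_of_real (1 - g1) \<cdot>\<^sub>v x + complex_of_real (- g1) \<cdot>\<^sub>v (transpose_mat (cmat C) *\<^sub>v y) = z \<cdot>\<^sub>v x \<and>
      complex_of_real (- (g2 * (1 - g1))) \<cdot>\<^sub>v (cmat C *\<^sub>v x) + (complex_of_real (1 - g2) \<cdot>\<^sub>v y +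
        complex_of_real (g1 * g2) \<cdot>\<^sub>v (cmat C *\<^sub>v (transpose_mat (cmat C) *\<^sub>v y))) = z \<cdot>\<^sub>v y)"
    (is "?ev \<longleftrightarrow> (\<exists>x y. ?P x y)")
proof
  have dim: "dim_row (cmat (iterM n1 n2 C g1 g2)) = n1 + n2"
    unfolding iterM_def using C by auto
  have smult_append: "z \<cdot>\<^sub>v (x @\<^sub>v y) = (z \<cdot>\<^sub>v x) @\<^sub>v (z \<cdot>\<^sub>v y)" for x y :: "complex vec"
    by (intro eq_vecI) auto
  show "?ev \<Longrightarrow> \<exists>x y. ?P x y"
  proof -
    assume ?ev
    then obtain v where v: "v \<in> carrier_vec (n1 + n2)" "v \<noteq> 0\<^sub>v (n1 + n2)"
      and Mv: "cmat (iterM n1 n2 C g1 g2) *\<^sub>v v = z \<cdot>\<^sub>v v"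
      unfolding eigenvalue_def eigenvector_def dim by auto
    define x where "x = vec_first v n1"
    define y where "y = vec_last v n2"
    have x: "x \<in> carrier_vec n1" and y: "y \<in> carrier_vec n2"
      unfolding x_def y_def by auto
    have v_xy: "v = x @\<^sub>v y"
      unfolding x_def y_def using v by simp
    have "?P x y"
      using Mv v(2) x y C
      unfolding v_xy cmat_iterM_mult_append[OF C x y] smult_append zero_vec_add_append
      by (auto simp: append_vec_eq[of _ n1])
    then show ?thesis by blast
  qed
  show "\<exists>x y. ?P x y \<Longrightarrow> ?ev"
  proof -
    assume "\<exists>x y. ?P x y"
    then obtain x y where "?P x y" by blast
    then show ?ev
      unfolding eigenvalue_def eigenvector_def dim
      by (intro exI[of _ "x @\<^sub>v y"])
        (auto simp: cmat_iterM_mult_append[OF C] smult_append zero_vec_add_append append_vec_eq[of _ n1])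
  qed
qed

text \<open>Every nonzero \<open>r \<in> gram_spectrum C\<close> contributes the roots of this quadratic to the
  spectrum of \<open>M(\<gamma>\<^sub>1,\<gamma>\<^sub>2)\<close>.\<close>
definition iter_char_poly :: "real \<Rightarrow> real \<Rightarrow> real \<Rightarrow> 'a :: real_algebra_1 \<Rightarrow> 'a" where
  "iter_char_poly g1 g2 r z =
     z\<^sup>2 - of_real (2 - g1 - g2 + g1 * g2 * r) * z + of_real ((1 - g1) * (1 - g2))"

lemma iter_char_poly_commute: "iter_char_poly g1 g2 = iter_char_poly g2 g1"
  unfolding iter_char_poly_def by (intro ext) (simp add: algebra_simps)

lemma iter_char_poly_of_real:
  "iter_char_poly g1 g2 r (of_real x :: 'a :: real_algebra_1) = of_real (iter_char_poly g1 g2 r x)"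
  unfolding iter_char_poly_def by simp

lemma iter_char_poly_real:
  "iter_char_poly g1 g2 r x = x\<^sup>2 - (2 - g1 - g2 + g1 * g2 * r) * x + (1 - g1) * (1 - g2)"
  unfolding iter_char_poly_def by simp

text \<open>The eigenvector is \<open>(\<gamma>\<^sub>1 C\<^sup>T y, (1 - \<gamma>\<^sub>1 - \<lambda>) y)\<close> for an eigenvector \<open>y\<close> of \<open>C C\<^sup>T\<close>.\<close>
lemma eigenvalue_iterM_char_root:
  assumes C: "C \<in> carrier_mat n2 n1" and r: "r \<in> gram_spectrum C" "r \<noteq> 0" and g1: "g1 \<noteq> 0"
    and root: "iter_char_poly g1 g2 r z = 0"
  shows "eigenvalue (cmat (iterM n1 n2 C g1 g2)) z"
proof -
  obtain y where y: "y \<in> carrier_vec n2" "y \<noteq> 0\<^sub>v n2"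
    and Cy: "cmat C *\<^sub>v (transpose_mat (cmat C) *\<^sub>v y) = complex_of_real r \<cdot>\<^sub>v y"
    using gram_spectrum_eigenvector[OF C r(1)] by blast
  define u where "u = transpose_mat (cmat C) *\<^sub>v y"
  define a where "a = complex_of_real (1 - g1) - z"
  have Ct: "transpose_mat (cmat C) \<in> carrier_mat n1 n2" and Cc: "cmat C \<in> carrier_mat n2 n1"
    using C by auto
  have u: "u \<in> carrier_vec n1" unfolding u_def using Ct y by auto
  have "u \<noteq> 0\<^sub>v n1"
  proof
    assume "u = 0\<^sub>v n1"
    then have "complex_of_real r \<cdot>\<^sub>v y = 0\<^sub>v n2"
      using Cy Cc unfolding u_def by simp
    then have "complex_of_real r = 0"
      by (rule smult_vec_eq_0_scalar[OF y])
    then show False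
      using r(2) by simp
  qed
  then have x0: "complex_of_real g1 \<cdot>\<^sub>v u \<noteq> 0\<^sub>v n1"
    using smult_vec_eq_0_scalar[OF u] g1 by auto
  have Ct_ay: "transpose_mat (cmat C) *\<^sub>v (a \<cdot>\<^sub>v y) = a \<cdot>\<^sub>v u"
    unfolding u_def using mult_mat_vec[OF Ct y(1)] .
  have Cc_u: "cmat C *\<^sub>v (k \<cdot>\<^sub>v u) = k \<cdot>\<^sub>v (complex_of_real r \<cdot>\<^sub>v y)" for k
    using mult_mat_vec[OF Cc u] Cy unfolding u_def by simp
  have scalar: "complex_of_real (- (g2 * (1 - g1))) * (complex_of_real g1 * (complex_of_real r * t)) +
      (complex_of_real (1 - g2) * (a * t) + complex_of_real (g1 * g2) * (a * (complex_of_real r * t))) =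
      z * (a * t)" for t
  proof -
    have "complex_of_real (- (g2 * (1 - g1))) * (complex_of_real g1 * (complex_of_real r * t)) +
        (complex_of_real (1 - g2) * (a * t) + complex_of_real (g1 * g2) * (a * (complex_of_real r * t))) -
        z * (a * t) = t * iter_char_poly g1 g2 r z"
      unfolding a_def iter_char_poly_def by (simp add: algebra_simps power2_eq_square)
    then show ?thesis
      using root by simp
  qed
  show ?thesis
    unfolding eigenvalue_iterM_iff[OF C]
  proof (intro exI conjI)
    show "complex_of_real g1 \<cdot>\<^sub>v u \<in> carrier_vec n1" "a \<cdot>\<^sub>v y \<in> carrier_vec n2"
      using u y by auto
    show "complex_of_real g1 \<cdot>\<^sub>v u \<noteq> 0\<^sub>v n1 \<or> a \<cdot>\<^sub>v y \<noteq> 0\<^sub>v n2"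
      using x0 by blast
    show "complex_of_real (1 - g1) \<cdot>\<^sub>v (complex_of_real g1 \<cdot>\<^sub>v u) +
        complex_of_real (- g1) \<cdot>\<^sub>v (transpose_mat (cmat C) *\<^sub>v (a \<cdot>\<^sub>v y)) = z \<cdot>\<^sub>v (complex_of_real g1 \<cdot>\<^sub>v u)"
      unfolding Ct_ay using u by (intro eq_vecI) (auto simp: a_def algebra_simps)
    show "complex_of_real (- (g2 * (1 - g1))) \<cdot>\<^sub>v (cmat C *\<^sub>v (complex_of_real g1 \<cdot>\<^sub>v u)) +
        (complex_of_real (1 - g2) \<cdot>\<^sub>v (a \<cdot>\<^sub>v y) +
         complex_of_real (g1 * g2) \<cdot>\<^sub>v (cmat C *\<^sub>v (transpose_mat (cmat C) *\<^sub>v (a \<cdot>\<^sub>v y)))) =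
        z \<cdot>\<^sub>v (a \<cdot>\<^sub>v y)"
      unfolding Ct_ay Cc_u using y scalar by (intro eq_vecI) auto
  qed
qed

lemma eigenvalue_iterM_kernel_transpose:
  assumes C: "C \<in> carrier_mat n2 n1" and "0 \<in> gram_spectrum C"
  shows "eigenvalue (cmat (iterM n1 n2 C g1 g2)) (complex_of_real (1 - g2))"
proof -
  obtain y where "y \<in> carrier_vec n2" "y \<noteq> 0\<^sub>v n2" "transpose_mat (cmat C) *\<^sub>v y = 0\<^sub>v n1"
    using gram_spectrum_kernel[OF assms] by blast
  then show ?thesis
    unfolding eigenvalue_iterM_iff[OF C] using C
    by (intro exI[of "\<lambda>x. \<exists>y. _ x y" "0\<^sub>v n1"] exI[of _ y]) auto
qed

lemma eigenvalue_iterM_kernel: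
  assumes C: "C \<in> carrier_mat n2 n1" and "0 \<in> gram_spectrum (transpose_mat C)"
  shows "eigenvalue (cmat (iterM n1 n2 C g1 g2)) (complex_of_real (1 - g1))"
proof -
  obtain x where "x \<in> carrier_vec n1" "x \<noteq> 0\<^sub>v n1" "cmat C *\<^sub>v x = 0\<^sub>v n2"
    using gram_spectrum_kernel[of "transpose_mat C" n1 n2] assms by (auto simp: transpose_cmat)
  then show ?thesis
    unfolding eigenvalue_iterM_iff[OF C] using C
    by (intro exI[of "\<lambda>x. \<exists>y. _ x y" x] exI[of _ "0\<^sub>v n2"]) auto
qed

lemma eigenvalue_iterM_unit_first_step:
  assumes C: "C \<in> carrier_mat n2 n1" and g2: "g2 \<noteq> 0"
    and ev: "eigenvalue (cmat (iterM n1 n2 C 1 g2)) z"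
  shows "z = 0 \<or> (\<exists>r\<in>gram_spectrum C. z = complex_of_real (1 - g2 + g2 * r))"
proof -
  obtain x y where x: "x \<in> carrier_vec n1" and y: "y \<in> carrier_vec n2"
    and nz: "x \<noteq> 0\<^sub>v n1 \<or> y \<noteq> 0\<^sub>v n2"
    and e1: "complex_of_real (1 - 1) \<cdot>\<^sub>v x + complex_of_real (- 1) \<cdot>\<^sub>v (transpose_mat (cmat C) *\<^sub>v y) = z \<cdot>\<^sub>v x"
    and e2: "complex_of_real (- (g2 * (1 - 1))) \<cdot>\<^sub>v (cmat C *\<^sub>v x) + (complex_of_real (1 - g2) \<cdot>\<^sub>v y +
       complex_of_real (1 * g2) \<cdot>\<^sub>v (cmat C *\<^sub>v (transpose_mat (cmat C) *\<^sub>v y))) = z \<cdot>\<^sub>v y"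
    using ev unfolding eigenvalue_iterM_iff[OF C] by blast
  have Ct: "transpose_mat (cmat C) \<in> carrier_mat n1 n2" and Cc: "cmat C \<in> carrier_mat n2 n1"
    using C by auto
  show ?thesis
  proof (cases "y = 0\<^sub>v n2")
    case True
    then have "z \<cdot>\<^sub>v x = 0\<^sub>v n1"
      using e1[symmetric] Ct x by auto
    then show ?thesis
      using smult_vec_eq_0_scalar[OF x] nz True by auto
  next
    case False
    define \<mu> where "\<mu> = (z - complex_of_real (1 - g2)) / complex_of_real g2"
    have "cmat C *\<^sub>v (transpose_mat (cmat C) *\<^sub>v y) = \<mu> \<cdot>\<^sub>v y"
    proof (rule eq_vecI)
      fix i assume "i < dim_vec (\<mu> \<cdot>\<^sub>v y)"
      then have i: "i < n2" using y by auto
      have "(1 - complex_of_real g2) * y $ i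
          + complex_of_real g2 * (cmat C *\<^sub>v (transpose_mat (cmat C) *\<^sub>v y)) $ i = z * y $ i"
        using arg_cong[OF e2, of "\<lambda>v. v $ i"] i y Cc Ct x by simp
      then show "(cmat C *\<^sub>v (transpose_mat (cmat C) *\<^sub>v y)) $ i = (\<mu> \<cdot>\<^sub>v y) $ i"
        using i y g2 unfolding \<mu>_def by (simp add: field_simps)
    qed (use y C in auto)
    then obtain r where "r \<in> gram_spectrum C" "\<mu> = complex_of_real r"
      using gram_eigenvalue_intro[OF C y False] by blast
    moreover have "z = complex_of_real (1 - g2) + complex_of_real g2 * \<mu>"
      unfolding \<mu>_def using g2 by simp
    ultimately show ?thesis by auto
  qed
qed

lemma eigenvalue_iterM_unit_second_step:
  assumes C: "C \<in> carrier_mat n2 n1" and g1: "g1 \<noteq> 0"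
    and ev: "eigenvalue (cmat (iterM n1 n2 C g1 1)) z"
  shows "z = 0 \<or> (\<exists>r\<in>gram_spectrum (transpose_mat C). z = complex_of_real (1 - g1 + g1 * r))"
proof -
  let ?Cc = "cmat C" and ?Ct = "transpose_mat (cmat C)"
  obtain x y where x: "x \<in> carrier_vec n1" and y: "y \<in> carrier_vec n2"
    and nz: "x \<noteq> 0\<^sub>v n1 \<or> y \<noteq> 0\<^sub>v n2"
    and e1: "complex_of_real (1 - g1) \<cdot>\<^sub>v x + complex_of_real (- g1) \<cdot>\<^sub>v (?Ct *\<^sub>v y) = z \<cdot>\<^sub>v x"
    and e2: "complex_of_real (- (1 * (1 - g1))) \<cdot>\<^sub>v (?Cc *\<^sub>v x) + (complex_of_real (1 - 1) \<cdot>\<^sub>v y +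
       complex_of_real (g1 * 1) \<cdot>\<^sub>v (?Cc *\<^sub>v (?Ct *\<^sub>v y))) = z \<cdot>\<^sub>v y"
    using ev unfolding eigenvalue_iterM_iff[OF C] by blast
  have Ct: "?Ct \<in> carrier_mat n1 n2" and Cc: "?Cc \<in> carrier_mat n2 n1"
    using C by auto
  have Cx: "?Cc *\<^sub>v x \<in> carrier_vec n2" and CCty: "?Cc *\<^sub>v (?Ct *\<^sub>v y) \<in> carrier_vec n2"
    using Cc Ct x y by auto
  show ?thesis
  proof (cases "z = 0")
    case False
    text \<open>Applying \<open>C\<close> to the first block equation and adding the second gives \<open>z (y + C x) = 0\<close>.\<close>
    have y_eq: "y = (- 1) \<cdot>\<^sub>v (?Cc *\<^sub>v x)"
    proof (rule eq_vecI)
      fix i assume "i < dim_vec ((- 1) \<cdot>\<^sub>v (?Cc *\<^sub>v x))"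
      then have i: "i < n2" using C by auto
      have Ce1: "?Cc *\<^sub>v (complex_of_real (1 - g1) \<cdot>\<^sub>v x + complex_of_real (- g1) \<cdot>\<^sub>v (?Ct *\<^sub>v y))
          = complex_of_real (1 - g1) \<cdot>\<^sub>v (?Cc *\<^sub>v x) + complex_of_real (- g1) \<cdot>\<^sub>v (?Cc *\<^sub>v (?Ct *\<^sub>v y))"
        using Cc Ct x y by (simp add: mult_add_distrib_mat_vec mult_mat_vec)
      have "(1 - complex_of_real g1) * (?Cc *\<^sub>v x) $ i - complex_of_real g1 * (?Cc *\<^sub>v (?Ct *\<^sub>v y)) $ i
          = z * (?Cc *\<^sub>v x) $ i"
        using arg_cong[OF arg_cong[OF e1, of "\<lambda>v. ?Cc *\<^sub>v v"], of "\<lambda>v. v $ i"] i Cc x CCty Cx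
        unfolding Ce1 mult_mat_vec[OF Cc x] by simp
      moreover have "- ((1 - complex_of_real g1) * (?Cc *\<^sub>v x) $ i)
          + complex_of_real g1 * (?Cc *\<^sub>v (?Ct *\<^sub>v y)) $ i = z * y $ i"
        using i C carrier_vecD[OF y] arg_cong[OF e2, of "\<lambda>v. v $ i"] by (simp add: algebra_simps)
      ultimately have "z * (y $ i + (?Cc *\<^sub>v x) $ i) = 0"
        by (simp add: algebra_simps)
      with i C False show "y $ i = ((- 1) \<cdot>\<^sub>v (?Cc *\<^sub>v x)) $ i"
        by (simp add: add_eq_0_iff)
    qed (use y C in auto)
    have x0: "x \<noteq> 0\<^sub>v n1"
      using nz Cc unfolding y_eq by auto
    define \<nu> where "\<nu> = (z - complex_of_real (1 - g1)) / complex_of_real g1"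
    have "?Ct *\<^sub>v (?Cc *\<^sub>v x) = \<nu> \<cdot>\<^sub>v x"
    proof (rule eq_vecI)
      fix i assume "i < dim_vec (\<nu> \<cdot>\<^sub>v x)"
      then have i: "i < n1" using x by auto
      have "?Ct *\<^sub>v y = (- 1) \<cdot>\<^sub>v (?Ct *\<^sub>v (?Cc *\<^sub>v x))"
        unfolding y_eq using mult_mat_vec[OF Ct Cx] .
      then have "(1 - complex_of_real g1) * x $ i + complex_of_real g1 * (?Ct *\<^sub>v (?Cc *\<^sub>v x)) $ i = z * x $ i"
        using arg_cong[OF e1, of "\<lambda>v. v $ i"] i x Ct Cx by simp
      then show "(?Ct *\<^sub>v (?Cc *\<^sub>v x)) $ i = (\<nu> \<cdot>\<^sub>v x) $ i"
        using i x g1 unfolding \<nu>_def by (simp add: field_simps)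
    qed (use x C in auto)
    then have "\<nu> \<in> complex_of_real ` gram_spectrum (transpose_mat C)"
      using gram_eigenvalue_intro[of "transpose_mat C" n1 n2 x] C x x0 by (simp add: transpose_cmat)
    moreover have "z = complex_of_real (1 - g1) + complex_of_real g1 * \<nu>"
      unfolding \<nu>_def using g1 by simp
    ultimately show ?thesis by auto
  qed simp
qed

section \<open>Roots of the characteristic quadratic\<close>

text \<open>With \<open>a = 1 - \<gamma>\<^sub>1\<close>, \<open>b = 1 - \<gamma>\<^sub>2\<close> the quadratic at \<open>r\<close> factors as
  \<open>(1 - r) (a b (1 + r) - (a + b) r)\<close>; by AM-GM \<open>a + b \<ge> 2\<surd>(a b)\<close>, so positivity
  forces \<open>r \<le> \<surd>(a b)\<close>.\<close>
lemma iter_char_poly_pos_imp_sq_le: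
  fixes g1 g2 r :: real
  assumes g1: "0 < g1" "g1 \<le> 1" and g2: "0 < g2" "g2 \<le> 1" and r: "0 \<le> r" "r \<le> 1"
    and pos: "iter_char_poly g1 g2 r r > 0"
  shows "r\<^sup>2 \<le> (1 - g1) * (1 - g2)"
proof (rule ccontr)
  define a where "a = 1 - g1"
  define b where "b = 1 - g2"
  have a: "0 \<le> a" and b: "0 \<le> b" using g1 g2 unfolding a_def b_def by auto
  assume "\<not> ?thesis"
  then have lt: "a * b < r\<^sup>2" unfolding a_def b_def by simp
  have "iter_char_poly g1 g2 r r = (1 - r) * (a * b * (1 + r) - (a + b) * r)"
    unfolding iter_char_poly_real a_def b_def by (simp add: algebra_simps power2_eq_square)
  then have r1: "r < 1" and q: "a * b * (1 + r) > (a + b) * r"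
    using pos r by (auto simp: zero_less_mult_iff)
  have "(a + b) * r \<ge> 0" using a b r by simp
  then have "a * b * (1 + r) > 0" using q by linarith
  then have ab0: "a * b > 0"
    using r by (simp add: zero_less_mult_iff)
  define t where "t = sqrt (a * b)"
  have t0: "t > 0" and tt: "t\<^sup>2 = a * b"
    unfolding t_def using ab0 by auto
  have "a + b \<ge> 2 * t"
  proof -
    have "(sqrt a - sqrt b)\<^sup>2 \<ge> 0" by simp
    then have "a + b - 2 * sqrt a * sqrt b \<ge> 0"
      using a b by (simp add: power2_eq_square algebra_simps)
    then show ?thesis unfolding t_def using a b by (simp add: real_sqrt_mult)
  qed
  then have "2 * t * r \<le> (a + b) * r"
    using r by (intro mult_right_mono) auto
  then have "t * (t * (1 + r)) > t * (2 * r)"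
    using q tt by (simp add: power2_eq_square algebra_simps)
  then have A: "t * (1 + r) > 2 * r"
    using t0 by (simp add: mult_less_cancel_left_pos)
  have "t < r"
    using power2_less_imp_less[of t r] lt tt r by simp
  then have "t * (1 + r) \<le> r * (1 + r)"
    using r by (intro mult_right_mono) auto
  then have "r * r > r"
    using A by (simp add: algebra_simps)
  moreover have "r * r \<le> r * 1"
    using r by (intro mult_left_mono) auto
  ultimately show False by simp
qed

lemma quadratic_root_norm_ge:
  fixes T D r :: real
  assumes T: "0 \<le> T" and r: "0 \<le> r" and cond: "r\<^sup>2 - T * r + D \<le> 0 \<or> r\<^sup>2 \<le> D"
  shows "\<exists>z :: complex. z\<^sup>2 - of_real T * z + of_real D = 0 \<and> r \<le> cmod z"
proof -
  define disc where "disc = T\<^sup>2 - 4 * D"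
  have at_r: "r\<^sup>2 - T * r + D = (r - T / 2)\<^sup>2 - disc / 4"
    unfolding disc_def by (simp add: power2_eq_square field_simps)
  show ?thesis
  proof (cases "disc \<ge> 0")
    case True
    define l where "l = (T + sqrt disc) / 2"
    have "sqrt disc * sqrt disc = disc" using True by simp
    then have root: "l\<^sup>2 - T * l + D = 0"
      unfolding l_def disc_def by (simp add: power2_eq_square field_simps)
    have lT: "l \<ge> T / 2" unfolding l_def using True by simp
    have "r \<le> l"
    proof (cases "r\<^sup>2 - T * r + D \<le> 0")
      case True
      then have "(2 * r - T)\<^sup>2 \<le> disc"
        using at_r by (simp add: power2_eq_square field_simps)
      then have "2 * r - T \<le> sqrt disc" by (rule real_le_rsqrt)
      then show ?thesis unfolding l_def by simp
    next
      case False
      have "T * l \<le> (2 * l) * l" using lT T by (intro mult_right_mono) auto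
      then have "D \<le> l\<^sup>2" using root by (simp add: power2_eq_square)
      then have "r\<^sup>2 \<le> l\<^sup>2" using False cond by simp
      then show ?thesis using power2_le_imp_le[of r l] lT T by simp
    qed
    moreover have "(complex_of_real l)\<^sup>2 - of_real T * of_real l + of_real D = 0"
      using arg_cong[OF root, of complex_of_real] by simp
    ultimately show ?thesis
      by (intro exI[of _ "complex_of_real l"]) simp
  next
    case False
    define z where "z = Complex (T / 2) (sqrt (- disc) / 2)"
    have sq: "sqrt (- disc) * sqrt (- disc) = - disc" using False by simp
    have "z\<^sup>2 - of_real T * z + of_real D = 0"
      unfolding z_def using sq disc_def by (simp add: complex_eq_iff power2_eq_square field_simps)
    moreover have "cmod z = sqrt D"
    proof -
      have "(T / 2)\<^sup>2 + (sqrt (- disc) / 2)\<^sup>2 = D"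
        using sq disc_def by (simp add: power2_eq_square field_simps)
      then show ?thesis unfolding z_def cmod_def by simp
    qed
    moreover have "r\<^sup>2 \<le> D"
      using cond at_r False zero_le_power2[of "r - T / 2"] by linarith
    then have "r \<le> sqrt D" using r by (simp add: real_le_rsqrt)
    ultimately show ?thesis by auto
  qed
qed

lemma iter_char_poly_root_norm_ge:
  fixes g1 g2 r :: real
  assumes g1: "0 < g1" "g1 \<le> 1" and g2: "0 < g2" "g2 \<le> 1" and r: "0 \<le> r" "r \<le> 1"
  shows "\<exists>z :: complex. iter_char_poly g1 g2 r z = 0 \<and> r \<le> cmod z"
proof -
  have "0 \<le> g1 * g2 * r" using g1 g2 r by simp
  then have T: "0 \<le> 2 - g1 - g2 + g1 * g2 * r" using g1 g2 by linarith
  have "iter_char_poly g1 g2 r r \<le> 0 \<or> r\<^sup>2 \<le> (1 - g1) * (1 - g2)"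
    using iter_char_poly_pos_imp_sq_le[OF g1 g2 r] by linarith
  then show ?thesis
    using quadratic_root_norm_ge[OF T r(1), of "(1 - g1) * (1 - g2)"]
    unfolding iter_char_poly_def iter_char_poly_real[symmetric] by blast
qed

text \<open>For a gram spectrum in \<open>[l, h]\<close>, the step \<open>opt_step l h\<close> centres
  \<open>1 - \<gamma> (1 - [l, h])\<close> at \<open>0\<close>, and \<open>opt_rate l h\<close> is the resulting half-width.\<close>
definition opt_step :: "real \<Rightarrow> real \<Rightarrow> real" where
  "opt_step l h = 2 / (2 - h - l)"

definition opt_rate :: "real \<Rightarrow> real \<Rightarrow> real" where
  "opt_rate l h = (h - l) / (2 - h - l)"

lemma opt_rate_nonneg: "0 \<le> l \<Longrightarrow> l \<le> h \<Longrightarrow> h < 1 \<Longrightarrow> 0 \<le> opt_rate l h"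
  unfolding opt_rate_def by simp

lemma one_le_opt_step: "0 \<le> l \<Longrightarrow> l \<le> h \<Longrightarrow> h < 1 \<Longrightarrow> 1 \<le> opt_step l h"
  unfolding opt_step_def by (simp add: pos_le_divide_eq)

lemma opt_step_contracts:
  assumes "0 \<le> l" "l \<le> \<mu>" "\<mu> \<le> h" "h < 1"
  shows "\<bar>1 - opt_step l h * (1 - \<mu>)\<bar> \<le> opt_rate l h"
proof -
  have den: "2 - h - l > 0" using assms by simp
  have "1 - opt_step l h * (1 - \<mu>) = (2 * \<mu> - h - l) / (2 - h - l)"
    unfolding opt_step_def using den by (simp add: field_simps)
  moreover have "\<bar>2 * \<mu> - h - l\<bar> / (2 - h - l) \<le> (h - l) / (2 - h - l)"
    using assms den by (simp add: divide_right_mono)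
  ultimately show ?thesis
    unfolding opt_rate_def using den by simp
qed

lemma one_minus_le_neg_opt_rate:
  assumes "0 \<le> l" "l \<le> h" "h < 1" and "opt_step l h \<le> g"
  shows "1 - g \<le> - opt_rate l h"
proof -
  have den: "2 - h - l > 0" using assms by simp
  have "1 - opt_step l h = - ((h + l) / (2 - h - l))"
    unfolding opt_step_def using den by (simp add: field_simps)
  moreover have "(h - l) / (2 - h - l) \<le> (h + l) / (2 - h - l)"
    using den assms by (simp add: divide_right_mono)
  ultimately show ?thesis
    unfolding opt_rate_def using assms by simp
qed

text \<open>Below the optimal step the root belonging to \<open>h\<close> is too large: the quadratic is
  nonpositive at \<open>opt_rate l h\<close>, being a convex combination of two nonpositive terms.\<close>
lemma iter_char_poly_root_ge_opt_rate:
  fixes u g l h :: real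
  assumes u: "0 < u" "u \<le> 1" and g: "1 \<le> g" "g \<le> opt_step l h" and lh: "0 \<le> l" "l < h" "h < 1"
  shows "\<exists>x. iter_char_poly u g h x = 0 \<and> opt_rate l h \<le> x"
proof -
  define r where "r = opt_rate l h"
  define T where "T = 2 - u - g + u * g * h"
  define D where "D = (1 - u) * (1 - g)"
  define disc where "disc = T\<^sup>2 - 4 * D"
  have den: "2 - h - l > 0" using lh by simp
  have r0: "0 \<le> r" and r1: "r \<le> 1"
    unfolding r_def opt_rate_def using den lh by (auto simp: pos_divide_le_eq)
  have "D \<le> 0" unfolding D_def using u g by (simp add: mult_nonneg_nonpos)
  then have disc0: "disc \<ge> 0" unfolding disc_def by (smt (verit) zero_le_power2)
  have split: "r\<^sup>2 - T * r + D = (1 - u) * ((r - 1) * (r - 1 + g)) + u * (r * (r - (1 - g * (1 - h))))"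
    unfolding T_def D_def by (simp add: power2_eq_square algebra_simps)
  have E0: "(r - 1) * (r - 1 + g) \<le> 0" using r0 r1 g by (simp add: mult_nonpos_nonneg)
  have "g * (1 - h) \<le> opt_step l h * (1 - h)" using g lh by (intro mult_right_mono) auto
  moreover have "opt_step l h * (1 - h) = 1 - r"
    unfolding r_def opt_rate_def opt_step_def using den by (simp add: field_simps)
  ultimately have E1: "r * (r - (1 - g * (1 - h))) \<le> 0"
    using r0 by (simp add: mult_nonneg_nonpos)
  have "r\<^sup>2 - T * r + D \<le> 0"
    unfolding split using E0 E1 u by (smt (verit) mult_nonneg_nonpos)
  then have "(2 * r - T)\<^sup>2 \<le> disc" unfolding disc_def by (simp add: power2_eq_square algebra_simps)
  then have "2 * r - T \<le> sqrt disc" by (rule real_le_rsqrt)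
  moreover have "sqrt disc * sqrt disc = disc" using disc0 by simp
  then have "iter_char_poly u g h ((T + sqrt disc) / 2) = 0"
    unfolding iter_char_poly_real T_def D_def disc_def by (simp add: power2_eq_square field_simps)
  ultimately show ?thesis
    unfolding r_def by (intro exI[of _ "(T + sqrt disc) / 2"]) auto
qed

text \<open>Above the optimal step the root belonging to \<open>l\<close> is too negative, by the mirror argument.\<close>
lemma iter_char_poly_root_le_neg_opt_rate:
  fixes u g l h :: real
  assumes u: "0 < u" "u \<le> 1" and g: "opt_step l h \<le> g" and lh: "0 \<le> l" "l < h" "h < 1"
  shows "\<exists>x. iter_char_poly u g l x = 0 \<and> x \<le> - opt_rate l h"
proof -
  define r where "r = opt_rate l h"
  define T where "T = 2 - u - g + u * g * l"
  define D where "D = (1 - u) * (1 - g)"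
  define disc where "disc = T\<^sup>2 - 4 * D"
  have den: "2 - h - l > 0" using lh by simp
  have r0: "0 \<le> r" unfolding r_def opt_rate_def using den lh by simp
  have step_l: "opt_step l h * (1 - l) = 1 + r"
    unfolding r_def opt_rate_def opt_step_def using den by (simp add: field_simps)
  have "1 + r \<le> opt_step l h"
    using step_l lh one_le_opt_step[of l h] by (smt (verit) mult_left_le)
  then have g_r: "1 + r \<le> g" using g by simp
  have "D \<le> 0"
    unfolding D_def using u g one_le_opt_step[of l h] lh by (simp add: mult_nonneg_nonpos)
  then have disc0: "disc \<ge> 0" unfolding disc_def by (smt (verit) zero_le_power2)
  have split: "r\<^sup>2 + T * r + D = (1 - u) * ((- r - 1) * (- r - 1 + g)) + u * ((- r) * (- r - (1 - g * (1 - l))))"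
    unfolding T_def D_def by (simp add: power2_eq_square algebra_simps)
  have E0: "(- r - 1) * (- r - 1 + g) \<le> 0" using r0 g_r by (simp add: mult_nonpos_nonneg)
  have "opt_step l h * (1 - l) \<le> g * (1 - l)" using g lh by (intro mult_right_mono) auto
  then have E1: "(- r) * (- r - (1 - g * (1 - l))) \<le> 0"
    using r0 step_l by (simp add: mult_nonpos_nonneg)
  have "r\<^sup>2 + T * r + D \<le> 0"
    unfolding split using E0 E1 u by (smt (verit) mult_nonneg_nonpos)
  then have "(2 * r + T)\<^sup>2 \<le> disc" unfolding disc_def by (simp add: power2_eq_square algebra_simps)
  then have "2 * r + T \<le> sqrt disc" by (rule real_le_rsqrt)
  moreover have "sqrt disc * sqrt disc = disc" using disc0 by simp
  then have "iter_char_poly u g l ((T - sqrt disc) / 2) = 0"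
    unfolding iter_char_poly_real T_def D_def disc_def by (simp add: power2_eq_square field_simps)
  ultimately show ?thesis
    unfolding r_def by (intro exI[of _ "(T - sqrt disc) / 2"]) auto
qed

section \<open>Minimising the spectral radius\<close>

lemma norm_eigenvalue_le_spectral_radius:
  assumes A: "A \<in> carrier_mat n n" and ev: "eigenvalue A z"
  shows "cmod z \<le> spectral_radius A"
  using spectral_radius_mem_max(2)[OF A eigenvalue_imp_nonzero_dim[OF A ev]] ev
  by (auto simp: spectrum_def)

lemma spectral_radius_le:
  assumes A: "A \<in> carrier_mat n n" and n: "0 < n" and bound: "\<And>z. eigenvalue A z \<Longrightarrow> cmod z \<le> b"
  shows "spectral_radius A \<le> b"
  using spectral_radius_mem_max(1)[OF A n] bound by (auto simp: spectrum_def)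

lemma spectral_radius_nonneg:
  assumes "A \<in> carrier_mat n n" and "0 < n"
  shows "0 \<le> spectral_radius A"
  using spectral_radius_mem_max(1)[OF assms] by auto

lemma is_minI:
  assumes "x \<in> S" and "\<And>y. y \<in> S \<Longrightarrow> x \<le> y"
  shows "is_min S x"
  using assms unfolding is_min_def by blast

text \<open>Abstracting over the matrix family lets the results below serve also with the two blocks
  exchanged.\<close>
locale stepsize_family =
  fixes M :: "real \<Rightarrow> real \<Rightarrow> complex mat" and N :: nat and S :: "real set"
  assumes M_carrier: "M g1 g2 \<in> carrier_mat N N"
    and dim_pos: "0 < N"
    and finite_S: "finite S" and S_nonempty: "S \<noteq> {}" and S_subset: "S \<subseteq> {0..<1}"
    and char_root: "\<And>r g1 g2 z. r \<in> S \<Longrightarrow> r \<noteq> 0 \<Longrightarrow> 0 < g1 \<Longrightarrow> 0 < g2 \<Longrightarrow>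
        iter_char_poly g1 g2 r z = 0 \<Longrightarrow> eigenvalue (M g1 g2) z"
    and unit_first_step: "\<And>g z. 1 \<le> g \<Longrightarrow> eigenvalue (M 1 g) z \<Longrightarrow>
        z = 0 \<or> (\<exists>r\<in>S. z = complex_of_real (1 - g + g * r))"
begin

abbreviation rad :: "real \<Rightarrow> real \<Rightarrow> real" where
  "rad g1 g2 \<equiv> spectral_radius (M g1 g2)"

lemma norm_eigenvalue_le_rad: "eigenvalue (M g1 g2) z \<Longrightarrow> cmod z \<le> rad g1 g2"
  using norm_eigenvalue_le_spectral_radius[OF M_carrier] .

lemma rad_le: "(\<And>z. eigenvalue (M g1 g2) z \<Longrightarrow> cmod z \<le> b) \<Longrightarrow> rad g1 g2 \<le> b"
  using spectral_radius_le[OF M_carrier dim_pos] .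

lemma rad_nonneg: "0 \<le> rad g1 g2"
  using spectral_radius_nonneg[OF M_carrier dim_pos] .

lemma Min_Max_S:
  "Min S \<in> S" "Max S \<in> S" "0 \<le> Min S" "Min S \<le> Max S" "Max S < 1"
  using finite_S S_nonempty S_subset by auto

lemma S_bounds: "r \<in> S \<Longrightarrow> Min S \<le> r \<and> r \<le> Max S"
  using finite_S by auto

lemma is_min_rad_unit_square:
  "is_min {rad g1 g2 | g1 g2. g1 \<in> {0<..1} \<and> g2 \<in> {0<..1}} (rad 1 1)"
proof -
  have h01: "0 \<le> Max S" "Max S \<le> 1"
    using Min_Max_S by auto
  have upper: "rad 1 1 \<le> Max S"
  proof (rule rad_le)
    fix z assume "eigenvalue (M 1 1) z"
    then have "z = 0 \<or> (\<exists>r\<in>S. z = complex_of_real r)"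
      using unit_first_step[of 1] by simp
    then show "cmod z \<le> Max S"
      using h01 S_bounds S_subset by auto
  qed
  have lower: "Max S \<le> rad g1 g2" if g: "0 < g1" "g1 \<le> 1" "0 < g2" "g2 \<le> 1" for g1 g2
  proof (cases "Max S = 0")
    case True
    then show ?thesis using rad_nonneg by simp
  next
    case False
    obtain z where "iter_char_poly g1 g2 (Max S) z = 0" "Max S \<le> cmod z"
      using iter_char_poly_root_norm_ge[OF g h01] by blast
    then show ?thesis
      using char_root[OF Min_Max_S(2) False] g norm_eigenvalue_le_rad by (meson order_trans)
  qed
  show ?thesis
    using upper lower by (intro is_minI) force+
qed

lemma rad_opt_step_le: "rad 1 (opt_step (Min S) (Max S)) \<le> opt_rate (Min S) (Max S)"
proof (rule rad_le)
  let ?l = "Min S" and ?h = "Max S"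
  have lh: "0 \<le> ?l" "?l \<le> ?h" "?h < 1"
    using Min_Max_S by auto
  fix z assume "eigenvalue (M 1 (opt_step ?l ?h)) z"
  then consider "z = 0" | r where "r \<in> S" "z = complex_of_real (1 - opt_step ?l ?h + opt_step ?l ?h * r)"
    using unit_first_step[OF one_le_opt_step[OF lh]] by blast
  then show "cmod z \<le> opt_rate ?l ?h"
  proof cases
    case 1
    then show ?thesis using opt_rate_nonneg[OF lh] by simp
  next
    case 2
    then have "cmod z = \<bar>1 - opt_step ?l ?h * (1 - r)\<bar>"
      unfolding 2(2) norm_of_real by (simp add: algebra_simps)
    also have "\<dots> \<le> opt_rate ?l ?h"
      using opt_step_contracts[of ?l r ?h] S_bounds[OF 2(1)] lh by simp
    finally show ?thesis .
  qed
qed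

lemma opt_rate_le_rad:
  assumes kernel: "\<And>g1 g2. 0 \<in> S \<Longrightarrow> eigenvalue (M g1 g2) (complex_of_real (1 - g2))"
    and u: "0 < u" "u \<le> 1" and g: "1 \<le> g"
  shows "opt_rate (Min S) (Max S) \<le> rad u g"
proof -
  let ?l = "Min S" and ?h = "Max S"
  have lh: "0 \<le> ?l" "?l \<le> ?h" "?h < 1"
    using Min_Max_S by auto
  consider "?l = ?h" | "?l < ?h" "g \<le> opt_step ?l ?h" | "?l < ?h" "opt_step ?l ?h \<le> g" "?l \<noteq> 0"
    | "?l < ?h" "opt_step ?l ?h \<le> g" "?l = 0"
    using lh by linarith
  then show ?thesis
  proof cases
    case 1
    then show ?thesis using rad_nonneg by (simp add: opt_rate_def)
  next
    case 2
    then obtain x where x: "iter_char_poly u g ?h x = 0" "opt_rate ?l ?h \<le> x"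
      using iter_char_poly_root_ge_opt_rate[OF u g] lh by blast
    have "?h \<noteq> 0" using 2 lh by simp
    then have "eigenvalue (M u g) (complex_of_real x)"
      using char_root[OF Min_Max_S(2)] x u g by (simp add: iter_char_poly_of_real)
    then show ?thesis
      using norm_eigenvalue_le_rad x(2) by fastforce
  next
    case 3
    then obtain x where x: "iter_char_poly u g ?l x = 0" "x \<le> - opt_rate ?l ?h"
      using iter_char_poly_root_le_neg_opt_rate[OF u] lh by blast
    then have "eigenvalue (M u g) (complex_of_real x)"
      using char_root[OF Min_Max_S(1)] 3 u g by (simp add: iter_char_poly_of_real)
    then show ?thesis
      using norm_eigenvalue_le_rad x(2) by fastforce
  next
    case 4
    then have "cmod (complex_of_real (1 - g)) \<le> rad u g"
      using norm_eigenvalue_le_rad[OF kernel] Min_Max_S(1) by simp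
    then have "\<bar>1 - g\<bar> \<le> rad u g"
      by (simp only: norm_of_real)
    moreover have "1 - g \<le> - opt_rate ?l ?h"
      using one_minus_le_neg_opt_rate[OF lh] 4 by simp
    ultimately show ?thesis by linarith
  qed
qed

lemma is_min_rad_unit_strip:
  assumes kernel: "\<And>g1 g2. 0 \<in> S \<Longrightarrow> eigenvalue (M g1 g2) (complex_of_real (1 - g2))"
  shows "\<exists>g'\<ge>1. is_min {rad g1 g2 | g1 g2. g1 \<in> {0<..1} \<and> g2 \<in> {1..}} (rad 1 g') \<and>
                 is_min {rad 1 g | g. g \<ge> 1} (rad 1 g')"
proof (intro exI conjI)
  let ?g = "opt_step (Min S) (Max S)"
  show step: "1 \<le> ?g"
    using one_le_opt_step Min_Max_S by simp
  show "is_min {rad g1 g2 | g1 g2. g1 \<in> {0<..1} \<and> g2 \<in> {1..}} (rad 1 ?g)"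
    using step rad_opt_step_le opt_rate_le_rad[OF kernel] by (intro is_minI) force+
  show "is_min {rad 1 g | g. g \<ge> 1} (rad 1 ?g)"
    using step rad_opt_step_le opt_rate_le_rad[OF kernel, of 1] by (intro is_minI) force+
qed

end

lemma cmat_iterM_carrier:
  "C \<in> carrier_mat n2 n1 \<Longrightarrow> cmat (iterM n1 n2 C g1 g2) \<in> carrier_mat (n1 + n2) (n1 + n2)"
  unfolding iterM_def by auto

lemma stepsize_family_iterM:
  assumes C: "C \<in> carrier_mat n2 n1" and n2: "0 < n2" and S: "gram_spectrum C \<subseteq> {0..<1}"
  shows "stepsize_family (\<lambda>g1 g2. cmat (iterM n1 n2 C g1 g2)) (n1 + n2) (gram_spectrum C)"
proof
  show "finite (gram_spectrum C)" using finite_gram_spectrum[OF C] .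
  show "gram_spectrum C \<noteq> {}" using gram_spectrum_nonempty[OF C n2] .
  show "\<And>r g1 g2 z. r \<in> gram_spectrum C \<Longrightarrow> r \<noteq> 0 \<Longrightarrow> 0 < g1 \<Longrightarrow> 0 < g2 \<Longrightarrow>
      iter_char_poly g1 g2 r z = 0 \<Longrightarrow> eigenvalue (cmat (iterM n1 n2 C g1 g2)) z"
    using eigenvalue_iterM_char_root[OF C] by simp
  show "\<And>g z. 1 \<le> g \<Longrightarrow> eigenvalue (cmat (iterM n1 n2 C 1 g)) z \<Longrightarrow>
      z = 0 \<or> (\<exists>r\<in>gram_spectrum C. z = complex_of_real (1 - g + g * r))"
    using eigenvalue_iterM_unit_first_step[OF C] by simp
qed (use S n2 cmat_iterM_carrier[OF C] in auto)

lemma stepsize_family_iterM_swap: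
  assumes C: "C \<in> carrier_mat n2 n1" and n1: "0 < n1" and S: "gram_spectrum (transpose_mat C) \<subseteq> {0..<1}"
  shows "stepsize_family (\<lambda>g1 g2. cmat (iterM n1 n2 C g2 g1)) (n1 + n2) (gram_spectrum (transpose_mat C))"
proof
  have Ct: "transpose_mat C \<in> carrier_mat n1 n2" using C by simp
  show "finite (gram_spectrum (transpose_mat C))" using finite_gram_spectrum[OF Ct] .
  show "gram_spectrum (transpose_mat C) \<noteq> {}" using gram_spectrum_nonempty[OF Ct n1] .
  show "\<And>r g1 g2 z. r \<in> gram_spectrum (transpose_mat C) \<Longrightarrow> r \<noteq> 0 \<Longrightarrow> 0 < g1 \<Longrightarrow> 0 < g2 \<Longrightarrow>
      iter_char_poly g1 g2 r z = 0 \<Longrightarrow> eigenvalue (cmat (iterM n1 n2 C g2 g1)) z"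
    by (rule eigenvalue_iterM_char_root[OF C gram_spectrum_transpose[OF C]])
      (simp_all add: iter_char_poly_commute)
  show "\<And>g z. 1 \<le> g \<Longrightarrow> eigenvalue (cmat (iterM n1 n2 C g 1)) z \<Longrightarrow>
      z = 0 \<or> (\<exists>r\<in>gram_spectrum (transpose_mat C). z = complex_of_real (1 - g + g * r))"
    using eigenvalue_iterM_unit_second_step[OF C] by simp
qed (use S n1 cmat_iterM_carrier[OF C] in auto)

theorem mainTheorem13:
  fixes A1 A2 :: "real mat" and m n1 n2 :: nat
  defines "C \<equiv> transpose_mat A2 * A1"
  assumes A1: "A1 \<in> carrier_mat m n1" and A2: "A2 \<in> carrier_mat m n2"
    and rank: "full_column_rank (hcat A1 A2)"
    and orth1: "transpose_mat A1 * A1 = 1\<^sub>m n1"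
    and orth2: "transpose_mat A2 * A2 = 1\<^sub>m n2"
    and Cnz: "C \<noteq> 0\<^sub>m n2 n1"
  shows "is_min {rho (iterM n1 n2 C g1 g2) | g1 g2. g1 \<in> {0<..1} \<and> g2 \<in> {0<..1}}
                 (rho (iterM n1 n2 C 1 1)) \<and>
         (\<exists>g2'\<ge>1.
           is_min {rho (iterM n1 n2 C g1 g2) | g1 g2. g1 \<in> {0<..1} \<and> g2 \<in> {1..}}
                   (rho (iterM n1 n2 C 1 g2')) \<and>
           is_min {rho (iterM n1 n2 C 1 g2) | g2. g2 \<ge> 1} (rho (iterM n1 n2 C 1 g2'))) \<and>
         (\<exists>g1'\<ge>1.
           is_min {rho (iterM n1 n2 C g1 g2) | g1 g2. g1 \<in> {1..} \<and> g2 \<in> {0<..1}}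
                   (rho (iterM n1 n2 C g1' 1)) \<and>
           is_min {rho (iterM n1 n2 C g1 1) | g1. g1 \<ge> 1} (rho (iterM n1 n2 C g1' 1)))"
proof -
  have C: "C \<in> carrier_mat n2 n1" unfolding C_def using A1 A2 by auto
  have n: "0 < n1" "0 < n2"
    using C Cnz by (auto intro!: eq_matI)
  have Ct: "transpose_mat C = transpose_mat A1 * A2"
    unfolding C_def using A1 A2 by (simp add: transpose_mult[of _ n2 m _ n1])
  have disj: "u = 0\<^sub>v n1 \<and> v = 0\<^sub>v n2"
    if "u \<in> carrier_vec n1" "v \<in> carrier_vec n2" "A1 *\<^sub>v u = A2 *\<^sub>v v" for u v
    using full_column_rank_hcat_disjoint[OF A1 A2 rank that] .
  have "gram_spectrum C \<subseteq> {0..<1}"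
    unfolding C_def by (rule cross_gram_spectrum_subset[OF A1 A2 orth1 orth2]) (use disj in blast)
  with stepsize_family_iterM[OF C n(2)]
  interpret first: stepsize_family "\<lambda>g1 g2. cmat (iterM n1 n2 C g1 g2)" "n1 + n2" "gram_spectrum C"
    by blast
  have "gram_spectrum (transpose_mat C) \<subseteq> {0..<1}"
    unfolding Ct by (rule cross_gram_spectrum_subset[OF A2 A1 orth2 orth1]) (use disj in force)
  with stepsize_family_iterM_swap[OF C n(1)]
  interpret second: stepsize_family "\<lambda>g1 g2. cmat (iterM n1 n2 C g2 g1)" "n1 + n2"
    "gram_spectrum (transpose_mat C)"
    by blast
  have swap: "{rho (iterM n1 n2 C g1 g2) | g1 g2. g1 \<in> {1..} \<and> g2 \<in> {0<..1}} =
      {second.rad g1 g2 | g1 g2. g1 \<in> {0<..1} \<and> g2 \<in> {1..}}"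
    unfolding rho_def by blast
  show ?thesis
    unfolding swap
    using first.is_min_rad_unit_square
      first.is_min_rad_unit_strip[OF eigenvalue_iterM_kernel_transpose[OF C]]
      second.is_min_rad_unit_strip[OF eigenvalue_iterM_kernel[OF C]]
    unfolding rho_def by simp
qed

end
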